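(* Let $S(z)$ be a Rosenbrock system matrix and $\lambda\in\mathbb{C}$ with $S(\lambda)$ invertible. (i) If $\eta^{\mathbb{S}}(\lambda,B)<\infty$, then $\eta^{\mathbb{S}}(\lambda,B)=1/\sigma_{\max}\big([0_{n,r}\ I_n]\,S(\lambda)^{-1}[I_r\ 0_{r,n}]^T\big)$. (ii) If $\eta^{\mathbb{S}}(\lambda,C)<\infty$, then $\eta^{\mathbb{S}}(\lambda,C)=1/\sigma_{\max}\big([I_r\ 0_{r,n}]\,S(\lambda)^{-1}[0_{n,r}\ I_n]^T\big)$. (iii) If $\eta^{\mathbb{S}}(\lambda,P)<\infty$, let $J_1:=\operatorname{diag}\Big(\begin{bmatrix}0_{r,n}\\ I_n\end{bmatrix},\tilde J_1\Big)\in\mathbb{C}^{(d+1)(r+n),(d+1)n}$ and $J_2:=\begin{bmatrix}[0_{n,r}\ I_n]\\ \tilde J_2\end{bmatrix}\in\mathbb{C}^{(d+1)n,r+n}$. Then $\eta^{\mathbb{S}}(\lambda,P)=(\mu_{\mathcal{S}}(M))^{-1}$, where $M:=J_2S(\lambda)^{-1}[I_{r+n}\ \lambda I_{r+n}\ \cdots\ \lambda^dI_{r+n}]J_1$ and $\mathcal{S}=\{\operatorname{diag}(\Delta_1,\ldots,\Delta_{d+1}) : \Delta_i\in\mathbb{C}^{n,n}\}$.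
   Context: A Rosenbrock system matrix is $S(z)=\begin{bmatrix}A-zI_r & B\\ C & P(z)\end{bmatrix}$ with $A\in\mathbb{C}^{r,r}$, $B\in\mathbb{C}^{r,n}$, $C\in\mathbb{C}^{n,r}$, $P(z)=\sum_{k=0}^d z^kA_k$, $A_k\in\mathbb{C}^{n,n}$. $\|\cdot\|$ is the spectral norm, $\sigma_{\max}$ the largest singular value, $0_{m,n}$ the $m\times n$ zero matrix. Backward errors with perturbation of one block only (with $\inf\emptyset=\infty$): $\eta^{\mathbb{S}}(\lambda,B):=\inf\{\|\Delta_B\| : \Delta_B\in\mathbb{C}^{r,n},\ \det(S(\lambda)-\begin{bmatrix}0&\Delta_B\\0&0\end{bmatrix})=0\}$; $\eta^{\mathbb{S}}(\lambda,C):=\inf\{\|\Delta_C\| : \Delta_C\in\mathbb{C}^{n,r},\ \det(S(\lambda)-\begin{bmatrix}0&0\\ \Delta_C&0\end{bmatrix})=0\}$; $\eta^{\mathbb{S}}(\lambda,P):=\inf\{\max_j\|\Delta_{A_j}\| : \Delta_{A_j}\in\mathbb{C}^{n,n},\ \det(S(\lambda)-\begin{bmatrix}0&0\\0&\sum_{j=0}^d\lambda^j\Delta_{A_j}\end{bmatrix})=0\}$. $\tilde J_1\in\mathbb{C}^{(r+n)d,\,nd}$ is the block-diagonal matrix with $d$ diagonal blocks each equal to $\begin{bmatrix}0_{r,n}\\ I_n\end{bmatrix}$; $\tilde J_2\in\mathbb{C}^{nd,\,r+n}$ is the vertical stack of $d$ copies of $[0_{n,r}\ I_n]$. Structured $\mu$-value: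 for $M\in\mathbb{C}^{k,p}$ and $\mathcal{S}\subseteq\mathbb{C}^{p,k}$, $\mu_{\mathcal{S}}(M):=\big(\inf\{\|\Delta\| : \Delta\in\mathcal{S},\ \det(I_p-\Delta M)=0\}\big)^{-1}$, with $\mu_{\mathcal S}(M)=0$ if no such $\Delta$ exists. *)

theory Defs
  imports "Jordan_Normal_Form.Matrix" "Jordan_Normal_Form.Determinant"
    "Jordan_Normal_Form.Char_Poly" "Jordan_Normal_Form.Schur_Decomposition"
    "HOL-Library.Extended_Real"
begin

fun mpoly :: "(nat \<Rightarrow> complex mat) \<Rightarrow> nat \<Rightarrow> complex \<Rightarrow> complex mat" where
  "mpoly As 0 z = As 0"
| "mpoly As (Suc k) z = mpoly As k z + (z ^ Suc k) \<cdot>\<^sub>m As (Suc k)"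

definition rosen :: "nat \<Rightarrow> complex mat \<Rightarrow> complex mat \<Rightarrow> complex mat \<Rightarrow> (nat \<Rightarrow> complex mat)
    \<Rightarrow> nat \<Rightarrow> complex \<Rightarrow> complex mat" where
  "rosen r A B C As d z = four_block_mat (A - z \<cdot>\<^sub>m 1\<^sub>m r) B C (mpoly As d z)"

definition vnorm :: "complex vec \<Rightarrow> real" where
  "vnorm v = sqrt (\<Sum>i<dim_vec v. (cmod (v $ i))\<^sup>2)"

definition spec_norm :: "complex mat \<Rightarrow> real" where
  "spec_norm M = Sup ((\<lambda>v. vnorm (M *\<^sub>v v)) ` {v \<in> carrier_vec (dim_col M). vnorm v \<le> 1})"

definition sigma_max :: "complex mat \<Rightarrow> real" where
  "sigma_max M = sqrt (Max (insert 0 (Re ` {e. eigenvalue (mat_adjoint M * M) e})))"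

definition hcat :: "complex mat \<Rightarrow> complex mat \<Rightarrow> complex mat" where
  "hcat X Y = four_block_mat X Y (0\<^sub>m 0 (dim_col X)) (0\<^sub>m 0 (dim_col Y))"

text \<open>Backward errors (infimum in the extended reals, Inf {} = \<infinity>).\<close>
definition eta_B :: "nat \<Rightarrow> nat \<Rightarrow> complex mat \<Rightarrow> complex mat \<Rightarrow> complex mat \<Rightarrow> (nat \<Rightarrow> complex mat)
    \<Rightarrow> nat \<Rightarrow> complex \<Rightarrow> ereal" where
  "eta_B r n A B C As d l = Inf {ereal (spec_norm DB) | DB. DB \<in> carrier_mat r n \<and>
     det (rosen r A B C As d l - four_block_mat (0\<^sub>m r r) DB (0\<^sub>m n r) (0\<^sub>m n n)) = 0}"

definition eta_C :: "nat \<Rightarrow> nat \<Rightarrow> complex mat \<Rightarrow> complex mat \<Rightarrow> complex mat \<Rightarrow> (nat \<Rightarrow> complex mat)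
    \<Rightarrow> nat \<Rightarrow> complex \<Rightarrow> ereal" where
  "eta_C r n A B C As d l = Inf {ereal (spec_norm DC) | DC. DC \<in> carrier_mat n r \<and>
     det (rosen r A B C As d l - four_block_mat (0\<^sub>m r r) (0\<^sub>m r n) DC (0\<^sub>m n n)) = 0}"

definition eta_P :: "nat \<Rightarrow> nat \<Rightarrow> complex mat \<Rightarrow> complex mat \<Rightarrow> complex mat \<Rightarrow> (nat \<Rightarrow> complex mat)
    \<Rightarrow> nat \<Rightarrow> complex \<Rightarrow> ereal" where
  "eta_P r n A B C As d l = Inf {ereal (Max ((\<lambda>j. spec_norm (DA j)) ` {0..d})) | DA.
     (\<forall>j\<le>d. DA j \<in> carrier_mat n n) \<and>
     det (rosen r A B C As d l - four_block_mat (0\<^sub>m r r) (0\<^sub>m r n) (0\<^sub>m n r) (mpoly DA d l)) = 0}"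

definition mu_S :: "complex mat set \<Rightarrow> complex mat \<Rightarrow> ereal" where
  "mu_S SS M = (let T = {D \<in> SS. det (1\<^sub>m (dim_col M) - D * M) = 0} in
     if T = {} then 0 else inverse (Inf ((\<lambda>D. ereal (spec_norm D)) ` T)))"

definition blockdiag_set :: "nat \<Rightarrow> nat \<Rightarrow> complex mat set" where
  "blockdiag_set n d = {diag_block_mat Ds | Ds. length Ds = d + 1 \<and> (\<forall>D \<in> set Ds. D \<in> carrier_mat n n)}"

definition J1t :: "nat \<Rightarrow> nat \<Rightarrow> nat \<Rightarrow> complex mat" where
  "J1t r n d = diag_block_mat (replicate d (0\<^sub>m r n @\<^sub>r 1\<^sub>m n))"

definition J2t :: "nat \<Rightarrow> nat \<Rightarrow> nat \<Rightarrow> complex mat" where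
  "J2t r n d = foldr (@\<^sub>r) (replicate d (hcat (0\<^sub>m n r) (1\<^sub>m n))) (0\<^sub>m 0 (r + n))"

definition J1 :: "nat \<Rightarrow> nat \<Rightarrow> nat \<Rightarrow> complex mat" where
  "J1 r n d = diag_block_mat [0\<^sub>m r n @\<^sub>r 1\<^sub>m n, J1t r n d]"

definition J2 :: "nat \<Rightarrow> nat \<Rightarrow> nat \<Rightarrow> complex mat" where
  "J2 r n d = hcat (0\<^sub>m n r) (1\<^sub>m n) @\<^sub>r J2t r n d"

definition powrow :: "nat \<Rightarrow> nat \<Rightarrow> complex \<Rightarrow> complex mat" where
  "powrow m d l = foldr hcat (map (\<lambda>k. (l ^ k) \<cdot>\<^sub>m 1\<^sub>m m) [0..<d + 1]) (0\<^sub>m m 0)"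

end

theory Submission
  imports "HOL-Analysis.Analysis" Defs
begin

no_notation Finite_Cartesian_Product.vec_nth (infixl "$" 90)

text \<open>Each backward error is the distance of \<open>S(\<lambda>)\<close> to singularity under perturbations of
  the form \<open>U \<Delta> V\<close> with fixed \<open>U\<close>, \<open>V\<close>. As \<open>S(\<lambda>)\<close> is invertible, \<open>S(\<lambda>) - U \<Delta> V\<close> is
  singular iff \<open>I - \<Delta> X\<close> is, where \<open>X = V S(\<lambda>)\<^sup>-\<^sup>1 U\<close>. For unstructured \<open>\<Delta>\<close> the smallest
  such \<open>\<parallel>\<Delta>\<parallel>\<close> is \<open>1 / \<parallel>X\<parallel>\<close>: a nonzero \<open>w = \<Delta> X w\<close> forces \<open>\<parallel>\<Delta>\<parallel> \<parallel>X\<parallel> \<ge> 1\<close>, and a rank-one \<open>\<Delta>\<close>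
  built from a vector on which \<open>X\<close> attains its norm achieves equality; moreover \<open>\<parallel>X\<parallel> = \<sigma>\<^sub>m\<^sub>a\<^sub>x(X)\<close>
  because that vector is an eigenvector of \<open>X\<^sup>H X\<close>. In (iii) the
  perturbation \<open>\<Sum>\<^sub>j \<lambda>\<^sup>j \<Delta>\<^sub>j\<close> of the polynomial block factors through the block-diagonal
  \<open>diag(\<Delta>\<^sub>0, \<dots>, \<Delta>\<^sub>d)\<close>, whose norm is \<open>max\<^sub>j \<parallel>\<Delta>\<^sub>j\<parallel>\<close>, so the backward error is the
  reciprocal of the structured \<open>\<mu>\<close>-value of \<open>X\<close> by definition.\<close>

lemma vnorm_nonneg: "0 \<le> vnorm v"
  unfolding vnorm_def by (simp add: sum_nonneg)

lemma vnorm_power2: "(vnorm v)\<^sup>2 = (\<Sum>i<dim_vec v. (cmod (v $ i))\<^sup>2)"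
  unfolding vnorm_def by (simp add: sum_nonneg)

lemma vnorm_smult: "vnorm (c \<cdot>\<^sub>v v) = cmod c * vnorm v"
proof -
  have "(\<Sum>i<dim_vec v. (cmod (c * v $ i))\<^sup>2) = (cmod c)\<^sup>2 * (\<Sum>i<dim_vec v. (cmod (v $ i))\<^sup>2)"
    by (simp add: sum_distrib_left norm_mult power_mult_distrib)
  then show ?thesis unfolding vnorm_def by (simp add: real_sqrt_mult)
qed

lemma vnorm_eq_0_iff:
  assumes "v \<in> carrier_vec p"
  shows "vnorm v = 0 \<longleftrightarrow> v = 0\<^sub>v p"
proof
  assume "vnorm v = 0"
  then have "(\<Sum>i<dim_vec v. (cmod (v $ i))\<^sup>2) = 0" unfolding vnorm_def by simp
  then have "\<forall>i\<in>{..<dim_vec v}. (cmod (v $ i))\<^sup>2 = 0"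
    by (subst sum_nonneg_eq_0_iff[symmetric]) auto
  then show "v = 0\<^sub>v p" using assms by (intro eq_vecI) auto
qed (use assms in \<open>auto simp: vnorm_def\<close>)

lemma vnorm_pos_iff:
  assumes "v \<in> carrier_vec p"
  shows "0 < vnorm v \<longleftrightarrow> v \<noteq> 0\<^sub>v p"
  using vnorm_eq_0_iff[OF assms] vnorm_nonneg[of v] by linarith

lemma sum_lessThan_add_split:
  "(\<Sum>i<a + b. f i) = (\<Sum>i<a. f i) + (\<Sum>i<b. f (a + i))" for f :: "nat \<Rightarrow> 'a::comm_monoid_add"
proof -
  have "(\<Sum>i<a + b. f i) = (\<Sum>i<a. f i) + sum f {a..<a + b}"
    by (simp add: atLeast0LessThan[symmetric] sum.atLeastLessThan_concat)
  also have "sum f {a..<a + b} = (\<Sum>i<b. f (a + i))"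
    by (simp add: sum.atLeastLessThan_shift_0[of f] atLeast0LessThan o_def)
  finally show ?thesis .
qed

lemma vnorm_append_power2: "(vnorm (x @\<^sub>v y))\<^sup>2 = (vnorm x)\<^sup>2 + (vnorm y)\<^sup>2"
  unfolding vnorm_power2 by (simp add: sum_lessThan_add_split)

lemma vnorm_append_zero: "vnorm (x @\<^sub>v 0\<^sub>v b) = vnorm x" "vnorm (0\<^sub>v b @\<^sub>v x) = vnorm x"
proof -
  have zero: "vnorm (0\<^sub>v b) = 0" by (simp add: vnorm_def)
  show "vnorm (x @\<^sub>v 0\<^sub>v b) = vnorm x" "vnorm (0\<^sub>v b @\<^sub>v x) = vnorm x"
    using vnorm_append_power2[of x "0\<^sub>v b"] vnorm_append_power2[of "0\<^sub>v b" x]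
    by (simp_all add: zero vnorm_nonneg power2_eq_iff_nonneg)
qed

lemma vnorm_le_1_coordinate:
  assumes "vnorm w \<le> 1" "i < dim_vec w"
  shows "cmod (w $ i) \<le> 1"
proof -
  have "(cmod (w $ i))\<^sup>2 \<le> (\<Sum>i<dim_vec w. (cmod (w $ i))\<^sup>2)"
    by (rule member_le_sum) (use assms in auto)
  also have "\<dots> \<le> 1" using assms unfolding vnorm_def by (simp add: real_sqrt_le_1_iff)
  finally show ?thesis by (simp add: power_le_one_iff)
qed

lemma mult_mat_vec_zero: "A \<in> carrier_mat k p \<Longrightarrow> A *\<^sub>v 0\<^sub>v p = (0\<^sub>v k :: complex vec)"
  by (intro eq_vecI) (auto simp: scalar_prod_def)

lemma index_mult_mat_vec_sum:
  assumes "M \<in> carrier_mat k p" "v \<in> carrier_vec p" "i < k"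
  shows "(M *\<^sub>v v) $ i = (\<Sum>j<p. M $$ (i,j) * v $ j)"
  using assms by (auto simp: scalar_prod_def row_def lessThan_atLeast0 intro!: sum.cong)

lemma index_mult_mat_sum:
  "A \<in> carrier_mat a b \<Longrightarrow> B \<in> carrier_mat b c \<Longrightarrow> i < a \<Longrightarrow> j < c \<Longrightarrow>
    (A * B) $$ (i,j) = (\<Sum>k<b. A $$ (i,k) * B $$ (k,j))"
  by (auto simp: scalar_prod_def lessThan_atLeast0 intro!: sum.cong)

lemma vec_eq_if_minus_eq_0:
  fixes a b :: "complex vec"
  assumes "a \<in> carrier_vec n" "b \<in> carrier_vec n" "a - b = 0\<^sub>v n"
  shows "a = b"
proof (rule eq_vecI)
  fix i assume i: "i < dim_vec b"
  have "(a - b) $ i = 0" using assms(2,3) i by simp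
  then show "a $ i = b $ i" using i assms(1,2) by simp
qed (use assms in simp)

text \<open>Vectors of \<open>\<complex>\<^sup>p\<close> are modelled as functions vanishing from index \<open>p\<close> on, so that the
  unit ball becomes a compact subset of a product space and the norm of \<open>M\<close> is attained.\<close>

lemma compact_unit_ball_coordinates:
  "compact (PiE UNIV (\<lambda>i. if i < (p::nat) then cball (0::complex) 1 else {0})
     \<inter> {f. (\<Sum>i<p. (cmod (f i))\<^sup>2) \<le> 1})"
proof (rule compact_Int_closed)
  have "compactin (product_topology (\<lambda>i. euclidean) UNIV)
          (PiE UNIV (\<lambda>i. if i < p then cball (0::complex) 1 else {0}))"
    by (subst compactin_PiE) auto
  then show "compact (PiE UNIV (\<lambda>i. if i < p then cball (0::complex) 1 else {0}))"
    by (simp add: euclidean_product_topology)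
  show "closed {f::nat \<Rightarrow> complex. (\<Sum>i<p. (cmod (f i))\<^sup>2) \<le> 1}"
    by (intro closed_Collect_le continuous_intros
          continuous_on_compose2[OF _ continuous_on_product_coordinates]) auto
qed

lemma exists_norm_maximizer:
  assumes M: "M \<in> carrier_mat k p"
  shows "\<exists>v\<in>carrier_vec p. vnorm v \<le> 1 \<and>
     (\<forall>w\<in>carrier_vec p. vnorm w \<le> 1 \<longrightarrow> vnorm (M *\<^sub>v w) \<le> vnorm (M *\<^sub>v v))"
proof -
  define K where "K = PiE UNIV (\<lambda>i. if i < p then cball (0::complex) 1 else {0})
     \<inter> {f. (\<Sum>i<p. (cmod (f i))\<^sup>2) \<le> 1}"
  define F where "F f = sqrt (\<Sum>i<k. (cmod (\<Sum>j\<in>{0..<p}. M $$ (i,j) * f j))\<^sup>2)"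
    for f :: "nat \<Rightarrow> complex"
  have F_eq: "F f = vnorm (M *\<^sub>v vec p f)" for f
    unfolding F_def vnorm_def using M
    by (auto simp: scalar_prod_def row_def intro!: arg_cong[where f=sqrt] sum.cong)
  have "compact K" unfolding K_def by (rule compact_unit_ball_coordinates)
  moreover have "(\<lambda>_. 0) \<in> K" unfolding K_def by auto
  moreover have "continuous_on K F"
  proof -
    have "\<And>j. continuous_on K (\<lambda>x. x j)"
      by (rule continuous_on_subset[OF continuous_on_product_coordinates]) simp
    then show ?thesis unfolding F_def by (intro continuous_intros)
  qed
  ultimately obtain x where x: "x \<in> K" and x_max: "\<And>y. y \<in> K \<Longrightarrow> F y \<le> F x"
    using continuous_attains_sup[of K F] by blast
  show ?thesis
  proof (intro bexI[of _ "vec p x"] conjI ballI impI)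
    show "vnorm (vec p x) \<le> 1"
      using x unfolding K_def vnorm_def by (simp add: real_sqrt_le_1_iff)
    fix w :: "complex vec" assume w: "w \<in> carrier_vec p" "vnorm w \<le> 1"
    define y where "y i = (if i < p then w $ i else 0)" for i
    have wy: "vec p y = w" using w by (auto simp: y_def)
    have "y \<in> K" unfolding K_def
    proof
      show "y \<in> PiE UNIV (\<lambda>i. if i < p then cball (0::complex) 1 else {0})"
        using vnorm_le_1_coordinate[OF w(2)] w(1) by (auto simp: y_def)
      show "y \<in> {f. (\<Sum>i<p. (cmod (f i))\<^sup>2) \<le> 1}"
        using w unfolding vnorm_def by (simp add: y_def real_sqrt_le_1_iff)
    qed
    from x_max[OF this] show "vnorm (M *\<^sub>v w) \<le> vnorm (M *\<^sub>v vec p x)"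
      by (simp add: F_eq wy)
  qed auto
qed

lemma spec_norm_attained:
  assumes M: "M \<in> carrier_mat k p"
  obtains v where "v \<in> carrier_vec p" "vnorm v \<le> 1" "vnorm (M *\<^sub>v v) = spec_norm M"
    and "\<And>w. w \<in> carrier_vec p \<Longrightarrow> vnorm w \<le> 1 \<Longrightarrow> vnorm (M *\<^sub>v w) \<le> spec_norm M"
proof -
  obtain v where v: "v \<in> carrier_vec p" "vnorm v \<le> 1"
    and v_max: "\<And>w. w \<in> carrier_vec p \<Longrightarrow> vnorm w \<le> 1 \<Longrightarrow> vnorm (M *\<^sub>v w) \<le> vnorm (M *\<^sub>v v)"
    using exists_norm_maximizer[OF M] by blast
  have "spec_norm M = vnorm (M *\<^sub>v v)"
    unfolding spec_norm_def using M v v_max by (intro cSup_eq_maximum) auto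
  with v v_max show ?thesis using that by simp
qed

lemma spec_norm_nonneg: "0 \<le> spec_norm M"
  by (rule spec_norm_attained[of M "dim_row M" "dim_col M"]) (auto intro: order_trans[OF vnorm_nonneg])

lemma spec_norm_bound:
  assumes M: "M \<in> carrier_mat k p" and w: "w \<in> carrier_vec p"
  shows "vnorm (M *\<^sub>v w) \<le> spec_norm M * vnorm w"
proof (cases "w = 0\<^sub>v p")
  case True
  then show ?thesis using M by (simp add: mult_mat_vec_zero vnorm_def)
next
  case False
  then have pos: "0 < vnorm w" using vnorm_pos_iff[OF w] by simp
  define u where "u = complex_of_real (1 / vnorm w) \<cdot>\<^sub>v w"
  have u: "u \<in> carrier_vec p" "vnorm u \<le> 1"
    using w pos by (auto simp: u_def vnorm_smult norm_divide)
  have "M *\<^sub>v u = complex_of_real (1 / vnorm w) \<cdot>\<^sub>v (M *\<^sub>v w)"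
    unfolding u_def by (rule mult_mat_vec[OF M w])
  then have "vnorm (M *\<^sub>v w) / vnorm w = vnorm (M *\<^sub>v u)"
    using pos by (simp add: vnorm_smult norm_divide)
  also have "\<dots> \<le> spec_norm M" by (rule spec_norm_attained[OF M]) (use u in auto)
  finally show ?thesis using pos by (simp add: divide_le_eq mult.commute)
qed

lemma spec_norm_le:
  assumes M: "M \<in> carrier_mat k p" and "0 \<le> c"
    and bound: "\<And>w. w \<in> carrier_vec p \<Longrightarrow> vnorm (M *\<^sub>v w) \<le> c * vnorm w"
  shows "spec_norm M \<le> c"
proof -
  obtain v where v: "v \<in> carrier_vec p" "vnorm v \<le> 1" "vnorm (M *\<^sub>v v) = spec_norm M"
    using spec_norm_attained[OF M] by blast
  have "spec_norm M \<le> c * vnorm v" using bound[OF v(1)] v(3) by simp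
  also have "\<dots> \<le> c" using \<open>0 \<le> c\<close> v(2) by (simp add: mult_left_le)
  finally show ?thesis .
qed

lemma spec_norm_attained_unit:
  assumes M: "M \<in> carrier_mat k p" and pos: "0 < spec_norm M"
  obtains v where "v \<in> carrier_vec p" "vnorm v = 1" "vnorm (M *\<^sub>v v) = spec_norm M"
proof -
  obtain v0 where v0: "v0 \<in> carrier_vec p" "vnorm v0 \<le> 1" "vnorm (M *\<^sub>v v0) = spec_norm M"
    using spec_norm_attained[OF M] by blast
  have "v0 \<noteq> 0\<^sub>v p" using v0 pos M by (auto simp: mult_mat_vec_zero vnorm_def)
  then have v0_pos: "0 < vnorm v0" using vnorm_pos_iff[OF v0(1)] by simp
  define v where "v = complex_of_real (1 / vnorm v0) \<cdot>\<^sub>v v0"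
  have v: "v \<in> carrier_vec p" "vnorm v = 1"
    unfolding v_def using v0 v0_pos by (auto simp: vnorm_smult norm_divide)
  have "M *\<^sub>v v = complex_of_real (1 / vnorm v0) \<cdot>\<^sub>v (M *\<^sub>v v0)"
    unfolding v_def by (rule mult_mat_vec[OF M v0(1)])
  then have "spec_norm M \<le> vnorm (M *\<^sub>v v)"
    using v0 v0_pos pos by (simp add: vnorm_smult norm_divide le_divide_eq)
  moreover have "vnorm (M *\<^sub>v v) \<le> spec_norm M" using spec_norm_bound[OF M v(1)] v(2) by simp
  ultimately show ?thesis using that v by simp
qed

section \<open>The largest singular value is the spectral norm\<close>

text \<open>Conjugate-linear in the first argument, so that \<open>cinner x (A *\<^sub>v y)\<close> is the usual
  \<open>x\<^sup>H A y\<close>.\<close>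

definition cinner :: "complex vec \<Rightarrow> complex vec \<Rightarrow> complex" where
  "cinner x y = (\<Sum>i<dim_vec x. cnj (x $ i) * y $ i)"

lemma cinner_self: "cinner x x = complex_of_real ((vnorm x)\<^sup>2)"
  unfolding cinner_def vnorm_power2 of_real_sum
  by (intro sum.cong refl) (metis complex_norm_square mult.commute)

lemma cinner_add_right:
  "dim_vec y = dim_vec x \<Longrightarrow> dim_vec z = dim_vec x \<Longrightarrow> cinner x (y + z) = cinner x y + cinner x z"
  unfolding cinner_def by (simp add: distrib_left sum.distrib)

lemma cinner_smult_right: "dim_vec y = dim_vec x \<Longrightarrow> cinner x (c \<cdot>\<^sub>v y) = c * cinner x y"
  unfolding cinner_def by (simp add: sum_distrib_left mult.assoc mult.left_commute)

lemma cmod_cinner_le: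
  assumes "dim_vec z = dim_vec y"
  shows "cmod (cinner y z) \<le> vnorm y * vnorm z"
proof -
  have "cmod (cinner y z) \<le> (\<Sum>i<dim_vec y. cmod (cnj (y $ i) * z $ i))"
    unfolding cinner_def by (rule norm_sum)
  also have "\<dots> = (\<Sum>i<dim_vec y. \<bar>cmod (y $ i)\<bar> * \<bar>cmod (z $ i)\<bar>)" by (simp add: norm_mult)
  also have "\<dots> \<le> L2_set (\<lambda>i. cmod (y $ i)) {..<dim_vec y} * L2_set (\<lambda>i. cmod (z $ i)) {..<dim_vec y}"
    by (rule L2_set_mult_ineq)
  also have "\<dots> = vnorm y * vnorm z" unfolding L2_set_def vnorm_def using assms by simp
  finally show ?thesis .
qed

lemma vnorm_add_smult_power2:
  assumes "dim_vec y = dim_vec x"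
  shows "(vnorm (x + complex_of_real t \<cdot>\<^sub>v y))\<^sup>2
           = (vnorm x)\<^sup>2 + 2 * t * Re (cinner y x) + t\<^sup>2 * (vnorm y)\<^sup>2"
proof -
  have coordinate: "(cmod (a + complex_of_real t * b))\<^sup>2
      = (cmod a)\<^sup>2 + 2 * t * Re (cnj b * a) + t\<^sup>2 * (cmod b)\<^sup>2" for a b
    unfolding cmod_power2 by (simp add: power2_eq_square algebra_simps)
  have "(vnorm (x + complex_of_real t \<cdot>\<^sub>v y))\<^sup>2
      = (\<Sum>i<dim_vec x. (cmod (x $ i))\<^sup>2 + 2 * t * Re (cnj (y $ i) * x $ i) + t\<^sup>2 * (cmod (y $ i))\<^sup>2)"
    unfolding vnorm_power2 using assms by (intro sum.cong) (auto simp: coordinate)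
  also have "\<dots> = (vnorm x)\<^sup>2 + 2 * t * Re (cinner y x) + t\<^sup>2 * (vnorm y)\<^sup>2"
    unfolding vnorm_power2 cinner_def sum.distrib Re_sum sum_distrib_left[symmetric]
    using assms by simp
  finally show ?thesis .
qed

lemma dim_mat_adjoint [simp]:
  "dim_row (mat_adjoint M) = dim_col M" "dim_col (mat_adjoint M) = dim_row M"
  unfolding mat_adjoint_def by (simp_all add: mat_of_rows_def)

lemma mat_adjoint_carrier: "M \<in> carrier_mat k p \<Longrightarrow> mat_adjoint M \<in> carrier_mat p k"
  by auto

lemma index_mat_adjoint:
  "M \<in> carrier_mat k p \<Longrightarrow> i < p \<Longrightarrow> j < k \<Longrightarrow> mat_adjoint M $$ (i,j) = cnj (M $$ (j,i))"
  unfolding mat_adjoint_def by (auto simp: mat_of_rows_index)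

lemma cinner_mult_mat_vec:
  assumes M: "M \<in> carrier_mat k p" and v: "v \<in> carrier_vec p" and w: "w \<in> carrier_vec p"
  shows "cinner (M *\<^sub>v w) (M *\<^sub>v v) = cinner w ((mat_adjoint M * M) *\<^sub>v v)"
proof -
  have A: "mat_adjoint M \<in> carrier_mat p k" by (rule mat_adjoint_carrier[OF M])
  have Mv: "M *\<^sub>v v \<in> carrier_vec k" using M v by simp
  have "(mat_adjoint M * M) *\<^sub>v v = mat_adjoint M *\<^sub>v (M *\<^sub>v v)" using A M v by simp
  moreover have "(mat_adjoint M *\<^sub>v (M *\<^sub>v v)) $ j = (\<Sum>i<k. cnj (M $$ (i,j)) * (M *\<^sub>v v) $ i)"
    if "j < p" for j
    using that by (simp add: index_mult_mat_vec_sum[OF A Mv] index_mat_adjoint[OF M])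
  ultimately have "cinner w ((mat_adjoint M * M) *\<^sub>v v)
      = (\<Sum>j<p. cnj (w $ j) * (\<Sum>i<k. cnj (M $$ (i,j)) * (M *\<^sub>v v) $ i))"
    unfolding cinner_def using w by (intro sum.cong) auto
  also have "\<dots> = (\<Sum>i<k. (\<Sum>j<p. cnj (M $$ (i,j)) * cnj (w $ j)) * (M *\<^sub>v v) $ i)"
    by (simp add: sum_distrib_left sum_distrib_right sum.swap[of _ "{..<k}"] mult_ac)
  also have "\<dots> = (\<Sum>i<k. cnj ((M *\<^sub>v w) $ i) * (M *\<^sub>v v) $ i)"
    by (intro sum.cong refl)
      (simp add: index_mult_mat_vec_sum[OF M w] cnj_sum sum_distrib_right mult_ac del: index_mult_mat_vec)
  also have "\<dots> = cinner (M *\<^sub>v w) (M *\<^sub>v v)"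
    unfolding cinner_def using M w by simp
  finally show ?thesis by simp
qed

lemma linear_coeff_eq_0_if_nonpos:
  fixes a b :: real
  assumes "\<And>t. 2 * t * a + t\<^sup>2 * b \<le> 0"
  shows "a = 0"
proof (rule ccontr)
  assume "a \<noteq> 0"
  define c where "c = \<bar>b\<bar> + 1"
  have c: "0 < c" "0 < 2 * c + b" unfolding c_def by (auto simp: abs_if)
  have "(2 * (a / c) * a + (a / c)\<^sup>2 * b) * c\<^sup>2 = a\<^sup>2 * (2 * c + b)"
    using c by (simp add: field_simps power2_eq_square)
  moreover have "(2 * (a / c) * a + (a / c)\<^sup>2 * b) * c\<^sup>2 \<le> 0"
    using assms[of "a / c"] by (simp add: mult_nonpos_nonneg)
  moreover have "0 < a\<^sup>2 * (2 * c + b)" using \<open>a \<noteq> 0\<close> c by simp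
  ultimately show False by simp
qed

lemma eigenvalue_adjoint_mult_le:
  assumes M: "M \<in> carrier_mat k p" and e: "eigenvalue (mat_adjoint M * M) e"
  shows "Re e \<le> (spec_norm M)\<^sup>2"
proof -
  let ?H = "mat_adjoint M * M"
  have H: "?H \<in> carrier_mat p p" using mat_adjoint_carrier[OF M] M by simp
  obtain x where x: "x \<in> carrier_vec p" "x \<noteq> 0\<^sub>v p" "?H *\<^sub>v x = e \<cdot>\<^sub>v x"
    using e H unfolding eigenvalue_def eigenvector_def by auto
  have x_pos: "0 < vnorm x" using vnorm_pos_iff[OF x(1)] x(2) by simp
  have "e * complex_of_real ((vnorm x)\<^sup>2) = cinner x (?H *\<^sub>v x)"
    using x by (simp add: cinner_smult_right cinner_self)
  also have "\<dots> = complex_of_real ((vnorm (M *\<^sub>v x))\<^sup>2)"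
    using cinner_mult_mat_vec[OF M x(1) x(1)] cinner_self by simp
  finally have "Re e * (vnorm x)\<^sup>2 = (vnorm (M *\<^sub>v x))\<^sup>2"
    by (metis Re_complex_of_real times_complex.sel(1) Im_complex_of_real mult_zero_right diff_zero)
  also have "\<dots> \<le> (spec_norm M)\<^sup>2 * (vnorm x)\<^sup>2"
    using spec_norm_bound[OF M x(1)] vnorm_nonneg
    by (metis power_mono power_mult_distrib)
  finally show ?thesis using x_pos by simp
qed

text \<open>First-order optimality of a norm maximizer \<open>v\<close>: the quadratic
  \<open>\<parallel>M (v + t w)\<parallel>\<^sup>2 - \<parallel>M\<parallel>\<^sup>2 \<parallel>v + t w\<parallel>\<^sup>2\<close> in real \<open>t\<close> is nonpositive and vanishes at \<open>t = 0\<close>,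
  so its linear coefficient vanishes.\<close>

lemma norm_maximizer_stationary:
  assumes M: "M \<in> carrier_mat k p" and v: "v \<in> carrier_vec p" "vnorm v = 1"
    and v_max: "vnorm (M *\<^sub>v v) = spec_norm M" and w: "w \<in> carrier_vec p"
  shows "Re (cinner (M *\<^sub>v w) (M *\<^sub>v v)) = (spec_norm M)\<^sup>2 * Re (cinner w v)"
proof -
  let ?s = "spec_norm M"
  have "2 * t * (Re (cinner (M *\<^sub>v w) (M *\<^sub>v v)) - ?s\<^sup>2 * Re (cinner w v))
        + t\<^sup>2 * ((vnorm (M *\<^sub>v w))\<^sup>2 - ?s\<^sup>2 * (vnorm w)\<^sup>2) \<le> 0" for t
  proof -
    let ?y = "v + complex_of_real t \<cdot>\<^sub>v w"
    have y: "?y \<in> carrier_vec p" using v w by simp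
    have My: "M *\<^sub>v ?y = M *\<^sub>v v + complex_of_real t \<cdot>\<^sub>v (M *\<^sub>v w)"
      using M v w by (simp add: mult_add_distrib_mat_vec mult_mat_vec)
    have "(vnorm (M *\<^sub>v ?y))\<^sup>2 \<le> ?s\<^sup>2 * (vnorm ?y)\<^sup>2"
      using spec_norm_bound[OF M y] vnorm_nonneg by (metis power_mono power_mult_distrib)
    moreover have "(vnorm (M *\<^sub>v ?y))\<^sup>2
        = ?s\<^sup>2 + 2 * t * Re (cinner (M *\<^sub>v w) (M *\<^sub>v v)) + t\<^sup>2 * (vnorm (M *\<^sub>v w))\<^sup>2"
      unfolding My using M v w by (subst vnorm_add_smult_power2) (auto simp: v_max)
    moreover have "(vnorm ?y)\<^sup>2 = 1 + 2 * t * Re (cinner w v) + t\<^sup>2 * (vnorm w)\<^sup>2"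
      using v w by (subst vnorm_add_smult_power2) auto
    ultimately show ?thesis by (simp add: algebra_simps)
  qed
  then show ?thesis using linear_coeff_eq_0_if_nonpos by fastforce
qed

lemma eigenvalue_adjoint_mult_spec_norm:
  assumes M: "M \<in> carrier_mat k p" and pos: "0 < spec_norm M"
  shows "eigenvalue (mat_adjoint M * M) (complex_of_real ((spec_norm M)\<^sup>2))"
proof -
  let ?H = "mat_adjoint M * M" and ?c = "complex_of_real ((spec_norm M)\<^sup>2)"
  have H: "?H \<in> carrier_mat p p" using mat_adjoint_carrier[OF M] M by simp
  obtain v where v: "v \<in> carrier_vec p" "vnorm v = 1" "vnorm (M *\<^sub>v v) = spec_norm M"
    using spec_norm_attained_unit[OF M pos] by blast
  define u where "u = ?H *\<^sub>v v + (- ?c) \<cdot>\<^sub>v v"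
  have u: "u \<in> carrier_vec p" unfolding u_def using H v by simp
  have "cinner u (?H *\<^sub>v v + (- ?c) \<cdot>\<^sub>v v) = cinner u (?H *\<^sub>v v) + cinner u ((- ?c) \<cdot>\<^sub>v v)"
    by (rule cinner_add_right) (use H v u in auto)
  also have "cinner u ((- ?c) \<cdot>\<^sub>v v) = (- ?c) * cinner u v"
    by (rule cinner_smult_right) (use v u in auto)
  finally have "cinner u u = cinner u (?H *\<^sub>v v) + (- ?c) * cinner u v"
    by (simp only: u_def[symmetric])
  then have "Re (cinner u u) = Re (cinner (M *\<^sub>v u) (M *\<^sub>v v)) - (spec_norm M)\<^sup>2 * Re (cinner u v)"
    using cinner_mult_mat_vec[OF M v(1) u] by simp
  then have "vnorm u = 0"
    using norm_maximizer_stationary[OF M v u] by (simp add: cinner_self)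
  then have "u = 0\<^sub>v p" using vnorm_eq_0_iff[OF u] by simp
  have "?H *\<^sub>v v = ?c \<cdot>\<^sub>v v"
  proof (rule eq_vecI)
    fix i assume i: "i < dim_vec (?c \<cdot>\<^sub>v v)"
    have "u $ i = 0" using \<open>u = 0\<^sub>v p\<close> i v by simp
    then show "(?H *\<^sub>v v) $ i = (?c \<cdot>\<^sub>v v) $ i" unfolding u_def using i v H by simp
  qed (use M v in simp)
  moreover have "v \<noteq> 0\<^sub>v p" using v(2) vnorm_eq_0_iff[OF v(1)] by auto
  ultimately have "eigenvector ?H v ?c" unfolding eigenvector_def using M v(1) H by simp
  then show ?thesis unfolding eigenvalue_def by blast
qed

lemma finite_eigenvalues:
  fixes H :: "complex mat"
  assumes "H \<in> carrier_mat p p"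
  shows "finite {e. eigenvalue H e}"
proof -
  have "char_poly H \<noteq> 0" using degree_monic_char_poly[OF assms] by auto
  then have "finite {x. poly (char_poly H) x = 0}" by (rule poly_roots_finite)
  then show ?thesis using eigenvalue_root_char_poly[OF assms] by simp
qed

lemma sigma_max_eq_spec_norm:
  assumes M: "M \<in> carrier_mat k p"
  shows "sigma_max M = spec_norm M"
proof -
  let ?E = "{e. eigenvalue (mat_adjoint M * M) e}"
  have "Max (insert 0 (Re ` ?E)) = (spec_norm M)\<^sup>2"
  proof (rule Max_eqI)
    show "finite (insert 0 (Re ` ?E))"
      using finite_eigenvalues[of "mat_adjoint M * M" p] mat_adjoint_carrier[OF M] M by simp
    show "(spec_norm M)\<^sup>2 \<in> insert 0 (Re ` ?E)"
    proof (cases "spec_norm M = 0")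
      case False
      then have "0 < spec_norm M" using spec_norm_nonneg[of M] by simp
      from eigenvalue_adjoint_mult_spec_norm[OF M this] show ?thesis by force
    qed simp
  qed (use eigenvalue_adjoint_mult_le[OF M] in auto)
  then show ?thesis unfolding sigma_max_def using spec_norm_nonneg[of M] by simp
qed

section \<open>Singular perturbations of minimal norm\<close>

lemma det_one_minus_mult_eq_0_swap_imp:
  fixes A B :: "complex mat"
  assumes A: "A \<in> carrier_mat N m" and B: "B \<in> carrier_mat m N"
    and singular: "det (1\<^sub>m N - A * B) = 0"
  shows "det (1\<^sub>m m - B * A) = 0"
proof -
  have AB: "A * B \<in> carrier_mat N N" and BA: "B * A \<in> carrier_mat m m" using A B by auto
  obtain x where x: "x \<in> carrier_vec N" "x \<noteq> 0\<^sub>v N" "(1\<^sub>m N - A * B) *\<^sub>v x = 0\<^sub>v N"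
    using det_0_iff_vec_prod_zero[OF minus_carrier_mat[OF AB]] singular by auto
  have "x - (A * B) *\<^sub>v x = 0\<^sub>v N"
    using x AB by (simp add: minus_mult_distrib_mat_vec[OF _ AB x(1)])
  then have x_eq: "A *\<^sub>v (B *\<^sub>v x) = x"
    using vec_eq_if_minus_eq_0[of x N "(A * B) *\<^sub>v x"] x(1) A B by (simp add: assoc_mult_mat_vec)
  define w where "w = B *\<^sub>v x"
  have w: "w \<in> carrier_vec m" unfolding w_def using B x by simp
  have "w \<noteq> 0\<^sub>v m"
  proof
    assume "w = 0\<^sub>v m"
    then have "x = 0\<^sub>v N" using x_eq A by (simp add: w_def mult_mat_vec_zero)
    with x(2) show False ..
  qed
  moreover have "(1\<^sub>m m - B * A) *\<^sub>v w = 0\<^sub>v m"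
  proof -
    have "(B * A) *\<^sub>v w = w" using A B x x_eq by (simp add: w_def assoc_mult_mat_vec)
    then show ?thesis using w BA by (simp add: minus_mult_distrib_mat_vec[OF _ BA w])
  qed
  ultimately show ?thesis
    using det_0_iff_vec_prod_zero[OF minus_carrier_mat[OF BA]] w by auto
qed

lemma det_one_minus_mult_eq_0_swap:
  fixes A B :: "complex mat"
  assumes "A \<in> carrier_mat N m" and "B \<in> carrier_mat m N"
  shows "det (1\<^sub>m N - A * B) = 0 \<longleftrightarrow> det (1\<^sub>m m - B * A) = 0"
  using det_one_minus_mult_eq_0_swap_imp assms by blast

text \<open>With \<open>S\<^sup>-\<^sup>1\<close> the inverse of \<open>S\<close>, \<open>S - U D V = S (I - S\<^sup>-\<^sup>1 U D V)\<close>; swapping the factors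
  \<open>S\<^sup>-\<^sup>1 U\<close> and \<open>D V\<close> leaves the singularity of the identity-minus-product unchanged.\<close>

lemma det_perturbation_eq_0_iff:
  fixes S :: "complex mat"
  assumes S: "S \<in> carrier_mat N N" and Si: "Si \<in> carrier_mat N N" and inverse: "S * Si = 1\<^sub>m N"
    and U: "U \<in> carrier_mat N m" and D: "D \<in> carrier_mat m q" and V: "V \<in> carrier_mat q N"
  shows "det (S - U * D * V) = 0 \<longleftrightarrow> det (1\<^sub>m m - D * (V * Si * U)) = 0"
proof -
  have SiU: "Si * U \<in> carrier_mat N m" and DV: "D * V \<in> carrier_mat m N" using Si U D V by auto
  have factor: "S - U * D * V = S * (1\<^sub>m N - (Si * U) * (D * V))"
  proof -
    have "S * ((Si * U) * (D * V)) = (S * (Si * U)) * (D * V)"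
      using S SiU DV by (simp only: assoc_mult_mat)
    also have "S * (Si * U) = U"
      using S Si U inverse by (simp only: assoc_mult_mat[symmetric] left_mult_one_mat)
    also have "U * (D * V) = U * D * V" using U D V by (simp only: assoc_mult_mat)
    finally have "S * ((Si * U) * (D * V)) = U * D * V" .
    moreover have "S * (1\<^sub>m N - (Si * U) * (D * V)) = S * 1\<^sub>m N - S * ((Si * U) * (D * V))"
      using S SiU DV by (intro mult_minus_distrib_mat) auto
    ultimately show ?thesis using S by (simp add: right_mult_one_mat)
  qed
  have "det S * det Si = 1" using det_mult[OF S Si] inverse by simp
  then have "det S \<noteq> 0" by auto
  then have "det (S - U * D * V) = 0 \<longleftrightarrow> det (1\<^sub>m N - (Si * U) * (D * V)) = 0"
  proof -
    have "(Si * U) * (D * V) \<in> carrier_mat N N" using SiU DV by simp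
    then have "1\<^sub>m N - (Si * U) * (D * V) \<in> carrier_mat N N" by (rule minus_carrier_mat)
    from det_mult[OF S this] \<open>det S \<noteq> 0\<close> show ?thesis unfolding factor by simp
  qed
  also have "\<dots> \<longleftrightarrow> det (1\<^sub>m m - (D * V) * (Si * U)) = 0"
    by (rule det_one_minus_mult_eq_0_swap[OF SiU DV])
  also have "(D * V) * (Si * U) = D * (V * Si * U)"
    using assoc_mult_mat[OF D V SiU] assoc_mult_mat[OF V Si U] by simp
  finally show ?thesis .
qed

lemma singular_perturbation_norm_ge:
  assumes D: "D \<in> carrier_mat m q" and X: "X \<in> carrier_mat q m"
    and singular: "det (1\<^sub>m m - D * X) = 0"
  shows "1 \<le> spec_norm D * spec_norm X"
proof -
  have DX: "D * X \<in> carrier_mat m m" using D X by simp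
  obtain w where w: "w \<in> carrier_vec m" "w \<noteq> 0\<^sub>v m" "(1\<^sub>m m - D * X) *\<^sub>v w = 0\<^sub>v m"
    using det_0_iff_vec_prod_zero[OF minus_carrier_mat[OF DX]] singular by auto
  have "w - (D * X) *\<^sub>v w = 0\<^sub>v m"
    using w DX by (simp add: minus_mult_distrib_mat_vec[OF _ DX w(1)])
  then have DXw: "D *\<^sub>v (X *\<^sub>v w) = w"
    using vec_eq_if_minus_eq_0[of w m "(D * X) *\<^sub>v w"] w(1) D X by auto
  have w_pos: "0 < vnorm w" using vnorm_pos_iff[OF w(1)] w(2) by simp
  have "vnorm w \<le> spec_norm D * vnorm (X *\<^sub>v w)"
    using spec_norm_bound[OF D, of "X *\<^sub>v w"] X w DXw by simp
  also have "\<dots> \<le> spec_norm D * (spec_norm X * vnorm w)"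
    using spec_norm_bound[OF X w(1)] spec_norm_nonneg[of D] by (simp add: mult_left_mono)
  finally show ?thesis using w_pos by (simp add: mult.assoc)
qed

text \<open>The rank-one perturbation \<open>D = v (X v)\<^sup>H / \<parallel>X\<parallel>\<^sup>2\<close>, for a unit vector \<open>v\<close> attaining
  \<open>\<parallel>X\<parallel>\<close>, has \<open>D X v = v\<close> and norm \<open>1 / \<parallel>X\<parallel>\<close>.\<close>

lemma rank_one_singular_perturbation:
  assumes X: "X \<in> carrier_mat q m" and pos: "0 < spec_norm X"
  obtains D where "D \<in> carrier_mat m q" "det (1\<^sub>m m - D * X) = 0" "spec_norm D \<le> 1 / spec_norm X"
proof -
  let ?s = "spec_norm X"
  obtain v where v: "v \<in> carrier_vec m" "vnorm v = 1" "vnorm (X *\<^sub>v v) = ?s"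
    using spec_norm_attained_unit[OF X pos] by blast
  define y where "y = X *\<^sub>v v"
  have y: "y \<in> carrier_vec q" "vnorm y = ?s" unfolding y_def using X v by auto
  define D where "D = mat m q (\<lambda>(i,j). v $ i * cnj (y $ j) / complex_of_real (?s\<^sup>2))"
  have D: "D \<in> carrier_mat m q" unfolding D_def by simp
  have Dz: "D *\<^sub>v z = (cinner y z / complex_of_real (?s\<^sup>2)) \<cdot>\<^sub>v v" if z: "z \<in> carrier_vec q" for z
  proof (rule eq_vecI)
    fix i assume "i < dim_vec ((cinner y z / complex_of_real (?s\<^sup>2)) \<cdot>\<^sub>v v)"
    then have i: "i < m" using v by simp
    have "(D *\<^sub>v z) $ i = (\<Sum>j<q. D $$ (i,j) * z $ j)" by (rule index_mult_mat_vec_sum[OF D z i])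
    also have "\<dots> = (\<Sum>j<q. v $ i * (cnj (y $ j) * z $ j) / complex_of_real (?s\<^sup>2))"
      unfolding D_def using i by (intro sum.cong refl) (simp add: mult.assoc)
    also have "\<dots> = v $ i * cinner y z / complex_of_real (?s\<^sup>2)"
      unfolding cinner_def using y by (simp add: sum_divide_distrib[symmetric] sum_distrib_left)
    finally show "(D *\<^sub>v z) $ i = ((cinner y z / complex_of_real (?s\<^sup>2)) \<cdot>\<^sub>v v) $ i"
      using i v by simp
  qed (use D v in simp)
  have "D *\<^sub>v y = v" using Dz[OF y(1)] cinner_self[of y] y pos v by simp
  then have "(D * X) *\<^sub>v v = v" using D X v by (simp add: y_def)
  moreover have DX: "D * X \<in> carrier_mat m m" using D X by simp
  ultimately have "(1\<^sub>m m - D * X) *\<^sub>v v = 0\<^sub>v m"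
    using v by (simp add: minus_mult_distrib_mat_vec[OF _ DX v(1)])
  moreover have "v \<noteq> 0\<^sub>v m" using v(2) vnorm_eq_0_iff[OF v(1)] by auto
  ultimately have "det (1\<^sub>m m - D * X) = 0"
    using det_0_iff_vec_prod_zero[OF minus_carrier_mat[OF DX]] v(1) by auto
  moreover have "spec_norm D \<le> 1 / ?s"
  proof (rule spec_norm_le[OF D])
    fix z :: "complex vec" assume z: "z \<in> carrier_vec q"
    have "vnorm (D *\<^sub>v z) = cmod (cinner y z) / ?s\<^sup>2"
      using Dz[OF z] v by (simp add: vnorm_smult norm_divide norm_power)
    also have "\<dots> \<le> ?s * vnorm z / ?s\<^sup>2"
      using cmod_cinner_le[of z y] y z pos by (simp add: divide_right_mono)
    also have "\<dots> = 1 / ?s * vnorm z" using pos by (simp add: power2_eq_square)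
    finally show "vnorm (D *\<^sub>v z) \<le> 1 / ?s * vnorm z" .
  qed (use pos in simp)
  ultimately show ?thesis using that D by blast
qed

lemma Inf_norm_singular_perturbation:
  fixes X :: "complex mat"
  assumes X: "X \<in> carrier_mat q m"
    and ex: "\<exists>D. D \<in> carrier_mat m q \<and> det (1\<^sub>m m - D * X) = 0"
  shows "Inf {ereal (spec_norm D) | D. D \<in> carrier_mat m q \<and> det (1\<^sub>m m - D * X) = 0}
           = inverse (ereal (sigma_max X))"
proof -
  let ?s = "spec_norm X"
  let ?A = "{ereal (spec_norm D) | D. D \<in> carrier_mat m q \<and> det (1\<^sub>m m - D * X) = 0}"
  have lower: "1 / ?s \<le> spec_norm D" if "D \<in> carrier_mat m q" "det (1\<^sub>m m - D * X) = 0" for D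
    using singular_perturbation_norm_ge[OF that(1) X that(2)] spec_norm_nonneg[of X]
    by (cases "?s = 0") (simp_all add: divide_le_eq mult.commute)
  have pos: "0 < ?s"
    using ex singular_perturbation_norm_ge[OF _ X] spec_norm_nonneg[of X]
    by (metis less_eq_real_def mult_zero_right not_one_le_zero)
  obtain D0 where D0: "D0 \<in> carrier_mat m q" "det (1\<^sub>m m - D0 * X) = 0" "spec_norm D0 \<le> 1 / ?s"
    using rank_one_singular_perturbation[OF X pos] by blast
  have "Inf ?A = ereal (1 / ?s)"
  proof (rule antisym)
    have "Inf ?A \<le> ereal (spec_norm D0)" by (rule Inf_lower) (use D0 in auto)
    then show "Inf ?A \<le> ereal (1 / ?s)" using D0(3) by (meson ereal_less_eq(3) order_trans)
    show "ereal (1 / ?s) \<le> Inf ?A" by (rule Inf_greatest) (auto dest: lower)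
  qed
  then show ?thesis using sigma_max_eq_spec_norm[OF X] pos by (simp add: inverse_eq_divide)
qed

lemma Inf_norm_singular_structured_perturbation:
  fixes S :: "complex mat"
  assumes S: "S \<in> carrier_mat N N" and Si: "Si \<in> carrier_mat N N" and inverse: "S * Si = 1\<^sub>m N"
    and U: "U \<in> carrier_mat N m" and V: "V \<in> carrier_mat q N"
    and finite: "Inf {ereal (spec_norm D) | D. D \<in> carrier_mat m q \<and> det (S - U * D * V) = 0} < \<infinity>"
  shows "Inf {ereal (spec_norm D) | D. D \<in> carrier_mat m q \<and> det (S - U * D * V) = 0}
           = inverse (ereal (sigma_max (V * Si * U)))"
proof -
  have X: "V * Si * U \<in> carrier_mat q m" using U V Si by simp
  have same: "{ereal (spec_norm D) | D. D \<in> carrier_mat m q \<and> det (S - U * D * V) = 0}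
      = {ereal (spec_norm D) | D. D \<in> carrier_mat m q \<and> det (1\<^sub>m m - D * (V * Si * U)) = 0}"
    using det_perturbation_eq_0_iff[OF S Si inverse U _ V] by blast
  have "{ereal (spec_norm D) | D. D \<in> carrier_mat m q \<and> det (1\<^sub>m m - D * (V * Si * U)) = 0} \<noteq> {}"
    using finite unfolding same by (intro notI) (simp add: top_ereal_def)
  then have "\<exists>D. D \<in> carrier_mat m q \<and> det (1\<^sub>m m - D * (V * Si * U)) = 0" by blast
  then show ?thesis unfolding same by (rule Inf_norm_singular_perturbation[OF X])
qed

section \<open>Perturbations of the blocks \<open>B\<close> and \<open>C\<close>\<close>

lemma embedding_mult:
  assumes D: "D \<in> carrier_mat m q"
  shows "mat N m (\<lambda>(i,k). if i = a + k then 1 else 0) * D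
       = mat N q (\<lambda>(i,j). if a \<le> i \<and> i < a + m then D $$ (i - a, j) else (0::complex))"
proof (rule eq_matI, goal_cases)
  case (1 i j)
  then have ij: "i < N" "j < q" by auto
  have "(mat N m (\<lambda>(i,k). if i = a + k then 1 else 0) * D) $$ (i,j)
      = (\<Sum>k<m. (if i = a + k then 1 else 0) * D $$ (k,j))"
    using D ij by (subst index_mult_mat_sum[of _ N m _ q]) auto
  also have "\<dots> = (\<Sum>k<m. if k = i - a then (if a \<le> i then D $$ (k,j) else 0) else 0)"
    by (intro sum.cong) auto
  finally show ?case using ij by (auto simp: sum.delta)
qed (use D in auto)

lemma mult_embedding_transpose:
  assumes D: "D \<in> carrier_mat N q"
  shows "D * mat q N' (\<lambda>(k,j). if j = b + k then 1 else 0)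
       = mat N N' (\<lambda>(i,j). if b \<le> j \<and> j < b + q then D $$ (i, j - b) else (0::complex))"
proof (rule eq_matI, goal_cases)
  case (1 i j)
  then have ij: "i < N" "j < N'" by auto
  have "(D * mat q N' (\<lambda>(k,j). if j = b + k then 1 else 0)) $$ (i,j)
      = (\<Sum>k<q. D $$ (i,k) * (if j = b + k then 1 else 0))"
    using D ij by (subst index_mult_mat_sum[of _ N q _ N']) auto
  also have "\<dots> = (\<Sum>k<q. if k = j - b then (if b \<le> j then D $$ (i,k) else 0) else 0)"
    by (intro sum.cong) auto
  finally show ?case using ij by (auto simp: sum.delta)
qed (use D in auto)

lemma hcat_one_zero: "hcat (1\<^sub>m r) (0\<^sub>m r n) = mat r (r + n) (\<lambda>(k,j). if j = 0 + k then 1 else 0)"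
  and hcat_zero_one: "hcat (0\<^sub>m n r) (1\<^sub>m n) = mat n (r + n) (\<lambda>(k,j). if j = r + k then 1 else 0)"
  and transpose_hcat_one_zero:
    "transpose_mat (hcat (1\<^sub>m r) (0\<^sub>m r n)) = mat (r + n) r (\<lambda>(i,k). if i = 0 + k then 1 else 0)"
  and transpose_hcat_zero_one:
    "transpose_mat (hcat (0\<^sub>m n r) (1\<^sub>m n)) = mat (r + n) n (\<lambda>(i,k). if i = r + k then 1 else 0)"
  by (auto simp: hcat_def intro!: eq_matI)

lemma four_block_B_eq:
  assumes "DB \<in> carrier_mat r n"
  shows "four_block_mat (0\<^sub>m r r) DB (0\<^sub>m n r) (0\<^sub>m n n)
       = transpose_mat (hcat (1\<^sub>m r) (0\<^sub>m r n)) * DB * hcat (0\<^sub>m n r) (1\<^sub>m n)"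
  unfolding transpose_hcat_one_zero hcat_zero_one embedding_mult[OF assms]
  by (subst mult_embedding_transpose) (use assms in \<open>auto intro!: eq_matI\<close>)

lemma four_block_C_eq:
  assumes "DC \<in> carrier_mat n r"
  shows "four_block_mat (0\<^sub>m r r) (0\<^sub>m r n) DC (0\<^sub>m n n)
       = transpose_mat (hcat (0\<^sub>m n r) (1\<^sub>m n)) * DC * hcat (1\<^sub>m r) (0\<^sub>m r n)"
  unfolding transpose_hcat_zero_one hcat_one_zero embedding_mult[OF assms]
  by (subst mult_embedding_transpose) (use assms in \<open>auto intro!: eq_matI\<close>)

lemma mpoly_carrier: "\<forall>k\<le>d. As k \<in> carrier_mat n n \<Longrightarrow> mpoly As d z \<in> carrier_mat n n"
  by (induction d) auto

lemma rosen_carrier: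
  assumes "A \<in> carrier_mat r r" "B \<in> carrier_mat r n" "C \<in> carrier_mat n r"
    and "\<forall>k\<le>d. As k \<in> carrier_mat n n"
  shows "rosen r A B C As d l \<in> carrier_mat (r + n) (r + n)"
  unfolding rosen_def using assms mpoly_carrier[OF assms(4)] by (intro four_block_carrier_mat) auto

lemma eta_B_eq:
  assumes S: "rosen r A B C As d l \<in> carrier_mat (r + n) (r + n)"
    and Sinv: "Sinv \<in> carrier_mat (r + n) (r + n)" "rosen r A B C As d l * Sinv = 1\<^sub>m (r + n)"
    and finite: "eta_B r n A B C As d l < \<infinity>"
  shows "eta_B r n A B C As d l = inverse (ereal (sigma_max
           (hcat (0\<^sub>m n r) (1\<^sub>m n) * Sinv * transpose_mat (hcat (1\<^sub>m r) (0\<^sub>m r n)))))"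
proof -
  have U: "transpose_mat (hcat (1\<^sub>m r) (0\<^sub>m r n)) \<in> carrier_mat (r + n) r"
    and V: "hcat (0\<^sub>m n r) (1\<^sub>m n) \<in> carrier_mat n (r + n)"
    by (simp_all add: transpose_hcat_one_zero hcat_zero_one)
  show ?thesis
    using finite Inf_norm_singular_structured_perturbation[OF S Sinv U V]
    unfolding eta_B_def by (simp add: four_block_B_eq cong: conj_cong)
qed

lemma eta_C_eq:
  assumes S: "rosen r A B C As d l \<in> carrier_mat (r + n) (r + n)"
    and Sinv: "Sinv \<in> carrier_mat (r + n) (r + n)" "rosen r A B C As d l * Sinv = 1\<^sub>m (r + n)"
    and finite: "eta_C r n A B C As d l < \<infinity>"
  shows "eta_C r n A B C As d l = inverse (ereal (sigma_max
           (hcat (1\<^sub>m r) (0\<^sub>m r n) * Sinv * transpose_mat (hcat (0\<^sub>m n r) (1\<^sub>m n)))))"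
proof -
  have U: "transpose_mat (hcat (0\<^sub>m n r) (1\<^sub>m n)) \<in> carrier_mat (r + n) n"
    and V: "hcat (1\<^sub>m r) (0\<^sub>m r n) \<in> carrier_mat r (r + n)"
    by (simp_all add: transpose_hcat_zero_one hcat_one_zero)
  show ?thesis
    using finite Inf_norm_singular_structured_perturbation[OF S Sinv U V]
    unfolding eta_C_def by (simp add: four_block_C_eq cong: conj_cong)
qed

lemma sum_lessThan_mult_div_mod:
  fixes g :: "nat \<Rightarrow> nat \<Rightarrow> 'a::comm_monoid_add"
  shows "(\<Sum>a<K * N. g (a div N) (a mod N)) = (\<Sum>k<K. \<Sum>x<N. g k x)"
proof (cases "N = 0")
  case False
  let ?f = "\<lambda>a. g (a div N) (a mod N)"
  have block: "sum ?f {k * N..<k * N + N} = (\<Sum>x<N. ?f (k * N + x))" for k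
    by (simp add: sum.atLeastLessThan_shift_0[of ?f] atLeast0LessThan o_def)
  have "(\<Sum>a<K * N. ?f a) = (\<Sum>k<K. sum ?f {k * N..<k * N + N})"
    by (rule sum.nat_group[symmetric])
  also have "\<dots> = (\<Sum>k<K. \<Sum>x<N. g k x)"
    unfolding block using False by (intro sum.cong refl) simp
  finally show ?thesis .
qed simp

lemma foldr_hcat_eq_mat:
  assumes "\<forall>F\<in>set Fs. F \<in> carrier_mat m p"
  shows "foldr hcat Fs (0\<^sub>m m 0) = mat m (length Fs * p) (\<lambda>(i,j). Fs ! (j div p) $$ (i, j mod p))"
  using assms
proof (induction Fs)
  case Nil
  then show ?case by (intro eq_matI) auto
next
  case (Cons F Fs)
  have F: "F \<in> carrier_mat m p" using Cons.prems by simp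
  have IH: "foldr hcat Fs (0\<^sub>m m 0) = mat m (length Fs * p) (\<lambda>(i,j). Fs ! (j div p) $$ (i, j mod p))"
    using Cons by simp
  show ?case unfolding foldr.simps o_def IH unfolding hcat_def
  proof (rule eq_matI, goal_cases)
    case (1 i j)
    then have i: "i < m" and j: "j < p + length Fs * p" by auto
    show ?case
    proof (cases "j < p")
      case True then show ?thesis using i F by simp
    next
      case False
      moreover have "p > 0" using j False by (cases p) auto
      ultimately have "j div p = Suc ((j - p) div p)" "j mod p = (j - p) mod p"
        by (auto simp: div_if mod_if)
      then show ?thesis using i j F False by simp
    qed
  qed (use F in auto)
qed

lemma foldr_append_rows_eq_mat:
  assumes "\<forall>R\<in>set Rs. R \<in> carrier_mat p c"
  shows "foldr (@\<^sub>r) Rs (0\<^sub>m 0 c) = mat (length Rs * p) c (\<lambda>(i,j). Rs ! (i div p) $$ (i mod p, j))"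
  using assms
proof (induction Rs)
  case Nil
  then show ?case by (intro eq_matI) auto
next
  case (Cons R Rs)
  have R: "R \<in> carrier_mat p c" using Cons.prems by simp
  have IH: "foldr (@\<^sub>r) Rs (0\<^sub>m 0 c) = mat (length Rs * p) c (\<lambda>(i,j). Rs ! (i div p) $$ (i mod p, j))"
    using Cons by simp
  show ?case unfolding foldr.simps o_def IH unfolding append_rows_def
  proof (rule eq_matI, goal_cases)
    case (1 i j)
    then have i: "i < p + length Rs * p" and j: "j < c" by auto
    show ?case
    proof (cases "i < p")
      case True then show ?thesis using j R by simp
    next
      case False
      moreover have "p > 0" using i False by (cases p) auto
      ultimately have "i div p = Suc ((i - p) div p)" "i mod p = (i - p) mod p"
        by (auto simp: div_if mod_if)
      then show ?thesis using i j R False by simp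
    qed
  qed (use R in auto)
qed

lemma diag_block_mat_eq_mat:
  assumes "\<forall>B\<in>set Bs. B \<in> carrier_mat p q"
  shows "diag_block_mat Bs = mat (length Bs * p) (length Bs * q)
     (\<lambda>(i,j). if i div p = j div q then Bs ! (i div p) $$ (i mod p, j mod q) else 0)"
  using assms
proof (induction Bs)
  case Nil
  then show ?case by (intro eq_matI) auto
next
  case (Cons B Bs)
  have B: "B \<in> carrier_mat p q" using Cons.prems by simp
  define Z where "Z = mat (length Bs * p) (length Bs * q)
     (\<lambda>(i,j). if i div p = j div q then Bs ! (i div p) $$ (i mod p, j mod q) else (0::'a))"
  have IH: "diag_block_mat Bs = Z" using Cons unfolding Z_def by simp
  have Z: "dim_row Z = length Bs * p" "dim_col Z = length Bs * q" unfolding Z_def by auto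
  show ?case unfolding diag_block_mat.simps Let_def IH
  proof (rule eq_matI, goal_cases)
    case (1 i j)
    then have i: "i < p + length Bs * p" and j: "j < q + length Bs * q" by auto
    have i_div: "i div p = Suc ((i - p) div p)" "i mod p = (i - p) mod p" if "\<not> i < p"
    proof -
      have "p > 0" using i that by (cases p) auto
      then show "i div p = Suc ((i - p) div p)" "i mod p = (i - p) mod p"
        using that by (auto simp: div_if mod_if)
    qed
    have j_div: "j div q = Suc ((j - q) div q)" "j mod q = (j - q) mod q" if "\<not> j < q"
    proof -
      have "q > 0" using j that by (cases q) auto
      then show "j div q = Suc ((j - q) div q)" "j mod q = (j - q) mod q"
        using that by (auto simp: div_if mod_if)
    qed
    show ?case
    proof (cases "i < p"; cases "j < q")
      assume "i < p" "\<not> j < q"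
      then show ?thesis using B Z i j j_div by simp
    next
      assume "\<not> i < p" "j < q"
      then show ?thesis using B Z i j i_div by simp
    next
      assume "\<not> i < p" "\<not> j < q"
      then show ?thesis using B Z i j i_div j_div unfolding Z_def by simp
    qed (use B Z in simp)
  qed (use B in \<open>auto simp: Z_def\<close>)
qed

lemma powrow_eq_mat:
  "powrow m d l = mat m ((d + 1) * m) (\<lambda>(i,j). if i = j mod m then l ^ (j div m) else 0)"
proof -
  have "powrow m d l = mat m ((d + 1) * m)
     (\<lambda>(i,j). map (\<lambda>k. l ^ k \<cdot>\<^sub>m 1\<^sub>m m) [0..<d + 1] ! (j div m) $$ (i, j mod m))"
    unfolding powrow_def by (subst foldr_hcat_eq_mat[of _ m m]) auto
  also have "\<dots> = mat m ((d + 1) * m) (\<lambda>(i,j). if i = j mod m then l ^ (j div m) else 0)"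
  proof (rule eq_matI, goal_cases)
    case (1 i j)
    then have "i < m" "j div m < d + 1" by (auto simp: less_mult_imp_div_less)
    then show ?case using 1 by (auto simp del: upt_Suc)
  qed auto
  finally show ?thesis .
qed

lemma J1_eq_mat: "J1 r n d = mat ((d + 1) * (r + n)) ((d + 1) * n)
   (\<lambda>(a,b). if a div (r + n) = b div n \<and> a mod (r + n) = r + b mod n then 1 else 0)"
proof -
  let ?E = "0\<^sub>m r n @\<^sub>r 1\<^sub>m n :: complex mat"
  have E: "?E = mat (r + n) n (\<lambda>(x,y). if x = r + y then 1 else 0)"
    unfolding append_rows_def by (rule eq_matI) auto
  have "four_block_mat X (0\<^sub>m (dim_row X) 0) (0\<^sub>m 0 (dim_col X)) (0\<^sub>m 0 0) = X" for X :: "complex mat"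
    by (rule eq_matI) auto
  then have "J1 r n d = diag_block_mat (replicate (d + 1) ?E)"
    unfolding J1_def J1t_def by (simp add: Let_def)
  also have "\<dots> = mat ((d + 1) * (r + n)) ((d + 1) * n) (\<lambda>(i,j). if i div (r + n) = j div n
      then replicate (d + 1) ?E ! (i div (r + n)) $$ (i mod (r + n), j mod n) else 0)"
    by (subst diag_block_mat_eq_mat[of _ "r + n" n]) (auto simp: E simp del: replicate_Suc)
  also have "\<dots> = mat ((d + 1) * (r + n)) ((d + 1) * n)
      (\<lambda>(a,b). if a div (r + n) = b div n \<and> a mod (r + n) = r + b mod n then 1 else 0)"
  proof (rule eq_matI, goal_cases)
    case (1 i j)
    then have "i div (r + n) < d + 1" "0 < n" by (auto simp: less_mult_imp_div_less intro: gr0I)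
    then show ?case using 1 by (auto simp: E simp del: replicate_Suc)
  qed auto
  finally show ?thesis .
qed

lemma J2_eq_mat: "J2 r n d = mat ((d + 1) * n) (r + n) (\<lambda>(c,j). if j = r + c mod n then 1 else 0)"
proof -
  have "J2 r n d = foldr (@\<^sub>r) (replicate (d + 1) (hcat (0\<^sub>m n r) (1\<^sub>m n))) (0\<^sub>m 0 (r + n))"
    unfolding J2_def J2t_def by simp
  also have "\<dots> = mat ((d + 1) * n) (r + n)
      (\<lambda>(i,j). replicate (d + 1) (hcat (0\<^sub>m n r) (1\<^sub>m n)) ! (i div n) $$ (i mod n, j))"
    by (subst foldr_append_rows_eq_mat[of _ n "r + n"]) (auto simp: hcat_zero_one simp del: replicate_Suc)
  also have "\<dots> = mat ((d + 1) * n) (r + n) (\<lambda>(c,j). if j = r + c mod n then 1 else 0)"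
  proof (rule eq_matI, goal_cases)
    case (1 i j)
    then have "i div n < d + 1" "0 < n" by (auto simp: less_mult_imp_div_less intro: gr0I)
    then show ?case using 1 by (auto simp: hcat_zero_one simp del: replicate_Suc)
  qed auto
  finally show ?thesis .
qed

lemma diag_block_mat_map_eq_mat:
  assumes "\<forall>j\<le>d. DA j \<in> carrier_mat n n"
  shows "diag_block_mat (map DA [0..<d + 1]) = mat ((d + 1) * n) ((d + 1) * n)
     (\<lambda>(i,j). if i div n = j div n then DA (i div n) $$ (i mod n, j mod n) else 0)"
proof -
  have "diag_block_mat (map DA [0..<d + 1]) = mat ((d + 1) * n) ((d + 1) * n)
     (\<lambda>(i,j). if i div n = j div n then map DA [0..<d + 1] ! (i div n) $$ (i mod n, j mod n) else 0)"
    by (subst diag_block_mat_eq_mat[of _ n n]) (use assms in \<open>auto simp del: upt_Suc\<close>)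
  also have "\<dots> = mat ((d + 1) * n) ((d + 1) * n)
     (\<lambda>(i,j). if i div n = j div n then DA (i div n) $$ (i mod n, j mod n) else 0)"
  proof (rule eq_matI, goal_cases)
    case (1 i j)
    then have "i div n < d + 1" by (auto simp: less_mult_imp_div_less)
    then show ?case using 1 by (auto simp del: upt_Suc)
  qed auto
  finally show ?thesis .
qed

lemma mpoly_index:
  assumes "\<forall>k\<le>d. As k \<in> carrier_mat n n" "a < n" "b < n"
  shows "mpoly As d z $$ (a,b) = (\<Sum>k<d + 1. z ^ k * As k $$ (a,b))"
  using assms(1)
proof (induction d)
  case (Suc d)
  have "mpoly As d z \<in> carrier_mat n n" "As (Suc d) \<in> carrier_mat n n"
    using Suc.prems by (auto intro: mpoly_carrier)
  then have "mpoly As (Suc d) z $$ (a,b) = mpoly As d z $$ (a,b) + z ^ Suc d * As (Suc d) $$ (a,b)"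
    using assms(2,3) by simp
  then show ?case using Suc by simp
qed simp

lemma powrow_mult_J1:
  "powrow (r + n) d l * J1 r n d
     = mat (r + n) ((d + 1) * n) (\<lambda>(i,b). if i = r + b mod n then l ^ (b div n) else 0)"
proof (rule eq_matI, goal_cases)
  case (1 i b)
  then have i: "i < r + n" and b: "b < (d + 1) * n" by auto
  then have b_div: "b div n < d + 1" by (simp add: less_mult_imp_div_less)
  let ?g = "\<lambda>k x. (if i = x then l ^ k else 0) * (if k = b div n \<and> x = r + b mod n then 1 else 0)"
  have "(powrow (r + n) d l * J1 r n d) $$ (i,b) = (\<Sum>a<(d + 1) * (r + n).
      (if i = a mod (r + n) then l ^ (a div (r + n)) else 0) *
      (if a div (r + n) = b div n \<and> a mod (r + n) = r + b mod n then 1 else 0))"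
    unfolding powrow_eq_mat J1_eq_mat using i b
    by (subst index_mult_mat_sum[of _ "r + n" "(d + 1) * (r + n)" _ "(d + 1) * n"]) auto
  also have "\<dots> = (\<Sum>k<d + 1. \<Sum>x<r + n. ?g k x)"
    by (rule sum_lessThan_mult_div_mod[where g = ?g])
  also have "\<dots> = (\<Sum>k<d + 1. if k = b div n then (if i = r + b mod n then l ^ k else 0) else 0)"
  proof (rule sum.cong[OF refl])
    fix k
    have "(\<Sum>x<r + n. ?g k x)
        = (\<Sum>x<r + n. if x = i then (if k = b div n \<and> i = r + b mod n then l ^ k else 0) else 0)"
      by (intro sum.cong refl) auto
    then show "(\<Sum>x<r + n. ?g k x) = (if k = b div n then (if i = r + b mod n then l ^ k else 0) else 0)"
      using i by (simp add: sum.delta)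
  qed
  also have "\<dots> = (if i = r + b mod n then l ^ (b div n) else 0)"
    using b_div by (simp add: sum.delta)
  finally show ?case using i b by simp
qed (auto simp: powrow_eq_mat J1_eq_mat)

lemma powrow_mult_J1_mult_diag_block:
  assumes DA: "\<forall>j\<le>d. DA j \<in> carrier_mat n n"
  shows "powrow (r + n) d l * J1 r n d * diag_block_mat (map DA [0..<d + 1]) = mat (r + n) ((d + 1) * n)
     (\<lambda>(i,c). if r \<le> i then l ^ (c div n) * DA (c div n) $$ (i - r, c mod n) else 0)"
proof (rule eq_matI, goal_cases)
  case (1 i c)
  then have i: "i < r + n" and c: "c < (d + 1) * n" by auto
  then have c_div: "c div n < d + 1" by (simp add: less_mult_imp_div_less)
  let ?g = "\<lambda>k x. (if i = r + x then l ^ k else 0) * (if k = c div n then DA k $$ (x, c mod n) else 0)"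
  have "(powrow (r + n) d l * J1 r n d * diag_block_mat (map DA [0..<d + 1])) $$ (i,c)
     = (\<Sum>b<(d + 1) * n. (if i = r + b mod n then l ^ (b div n) else 0) *
         (if b div n = c div n then DA (b div n) $$ (b mod n, c mod n) else 0))"
    unfolding powrow_mult_J1 diag_block_mat_map_eq_mat[OF DA] using i c
    by (subst index_mult_mat_sum[of _ "r + n" "(d + 1) * n" _ "(d + 1) * n"]) auto
  also have "\<dots> = (\<Sum>k<d + 1. \<Sum>x<n. ?g k x)"
    by (rule sum_lessThan_mult_div_mod[where g = ?g])
  also have "\<dots> = (\<Sum>k<d + 1. if k = c div n
      then (if r \<le> i then l ^ k * DA k $$ (i - r, c mod n) else 0) else 0)"
  proof (rule sum.cong[OF refl])
    fix k
    have "(\<Sum>x<n. ?g k x) = (\<Sum>x<n. if x = i - r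
        then (if k = c div n \<and> r \<le> i then l ^ k * DA k $$ (i - r, c mod n) else 0) else 0)"
      by (intro sum.cong refl) auto
    then show "(\<Sum>x<n. ?g k x)
        = (if k = c div n then (if r \<le> i then l ^ k * DA k $$ (i - r, c mod n) else 0) else 0)"
      using i by (auto simp: sum.delta)
  qed
  also have "\<dots> = (if r \<le> i then l ^ (c div n) * DA (c div n) $$ (i - r, c mod n) else 0)"
    using c_div by (simp add: sum.delta)
  finally show ?case using i c by simp
qed (use diag_block_mat_map_eq_mat[OF DA] in \<open>auto simp: powrow_mult_J1 simp del: upt_Suc\<close>)

text \<open>Block by block, \<open>[I, \<lambda> I, \<dots>, \<lambda>\<^sup>d I] J\<^sub>1 diag(\<Delta>\<^sub>0, \<dots>, \<Delta>\<^sub>d) J\<^sub>2 = \<Sum>\<^sub>k \<lambda>\<^sup>k E \<Delta>\<^sub>k E\<^sup>T\<close>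
  with \<open>E = [0; I\<^sub>n]\<close>, which is the perturbation \<open>diag(0, \<Sum>\<^sub>k \<lambda>\<^sup>k \<Delta>\<^sub>k)\<close> of the polynomial block.\<close>

lemma four_block_P_eq:
  assumes DA: "\<forall>j\<le>d. DA j \<in> carrier_mat n n"
  shows "four_block_mat (0\<^sub>m r r) (0\<^sub>m r n) (0\<^sub>m n r) (mpoly DA d l) =
    powrow (r + n) d l * J1 r n d * diag_block_mat (map DA [0..<d + 1]) * J2 r n d"
proof (rule eq_matI, goal_cases)
  case (1 i j)
  then have i: "i < r + n" and j: "j < r + n" by (auto simp: J2_eq_mat powrow_eq_mat)
  have P: "mpoly DA d l \<in> carrier_mat n n" by (rule mpoly_carrier[OF DA])
  let ?g = "\<lambda>k x. (if r \<le> i then l ^ k * DA k $$ (i - r, x) else 0) * (if j = r + x then 1 else 0)"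
  have "(powrow (r + n) d l * J1 r n d * diag_block_mat (map DA [0..<d + 1]) * J2 r n d) $$ (i,j)
     = (\<Sum>c<(d + 1) * n. (if r \<le> i then l ^ (c div n) * DA (c div n) $$ (i - r, c mod n) else 0) *
        (if j = r + c mod n then 1 else 0))"
    unfolding powrow_mult_J1_mult_diag_block[OF DA] J2_eq_mat using i j
    by (subst index_mult_mat_sum[of _ "r + n" "(d + 1) * n" _ "r + n"]) auto
  also have "\<dots> = (\<Sum>k<d + 1. \<Sum>x<n. ?g k x)"
    by (rule sum_lessThan_mult_div_mod[where g = ?g])
  also have "\<dots> = (\<Sum>k<d + 1. if r \<le> i \<and> r \<le> j then l ^ k * DA k $$ (i - r, j - r) else 0)"
  proof (rule sum.cong[OF refl])
    fix k
    have "(\<Sum>x<n. ?g k x) = (\<Sum>x<n. if x = j - r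
        then (if r \<le> i \<and> r \<le> j then l ^ k * DA k $$ (i - r, j - r) else 0) else 0)"
      by (intro sum.cong refl) auto
    then show "(\<Sum>x<n. ?g k x) = (if r \<le> i \<and> r \<le> j then l ^ k * DA k $$ (i - r, j - r) else 0)"
      using j by (auto simp: sum.delta)
  qed
  also have "\<dots> = four_block_mat (0\<^sub>m r r) (0\<^sub>m r n) (0\<^sub>m n r) (mpoly DA d l) $$ (i,j)"
  proof (cases "r \<le> i \<and> r \<le> j")
    case True
    then have "mpoly DA d l $$ (i - r, j - r) = (\<Sum>k<d + 1. l ^ k * DA k $$ (i - r, j - r))"
      using i j by (intro mpoly_index[OF DA]) auto
    then show ?thesis using True i j P by simp
  qed (use i j P in auto)
  finally show ?case by simp
qed (auto simp: J2_eq_mat powrow_eq_mat carrier_matD[OF mpoly_carrier[OF DA]])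

section \<open>The spectral norm of block-diagonal matrices\<close>

lemma spec_norm_four_block_diag:
  assumes A: "A \<in> carrier_mat a a" and B: "B \<in> carrier_mat b b"
  shows "spec_norm (four_block_mat A (0\<^sub>m a b) (0\<^sub>m b a) B) = max (spec_norm A) (spec_norm B)"
proof -
  let ?M = "four_block_mat A (0\<^sub>m a b) (0\<^sub>m b a) B" and ?c = "max (spec_norm A) (spec_norm B)"
  have M: "?M \<in> carrier_mat (a + b) (a + b)" using A B by auto
  have c: "0 \<le> ?c" using spec_norm_nonneg[of A] by simp
  have "spec_norm ?M \<le> ?c"
  proof (rule spec_norm_le[OF M c])
    fix w :: "complex vec" assume w: "w \<in> carrier_vec (a + b)"
    define x y where "x = vec_first w a" and "y = vec_last w b"
    have x: "x \<in> carrier_vec a" and y: "y \<in> carrier_vec b" and wxy: "w = x @\<^sub>v y"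
      unfolding x_def y_def using w by auto
    have "(vnorm (?M *\<^sub>v w))\<^sup>2 = (vnorm (A *\<^sub>v x))\<^sup>2 + (vnorm (B *\<^sub>v y))\<^sup>2"
      unfolding wxy mult_mat_vec_split[OF A B x y] by (rule vnorm_append_power2)
    also have "\<dots> \<le> (spec_norm A * vnorm x)\<^sup>2 + (spec_norm B * vnorm y)\<^sup>2"
      using spec_norm_bound[OF A x] spec_norm_bound[OF B y] vnorm_nonneg
      by (intro add_mono power_mono) auto
    also have "\<dots> \<le> (?c * vnorm x)\<^sup>2 + (?c * vnorm y)\<^sup>2"
    proof (rule add_mono)
      show "(spec_norm A * vnorm x)\<^sup>2 \<le> (?c * vnorm x)\<^sup>2"
        by (rule power_mono[OF mult_right_mono]) (use spec_norm_nonneg[of A] vnorm_nonneg[of x] in auto)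
      show "(spec_norm B * vnorm y)\<^sup>2 \<le> (?c * vnorm y)\<^sup>2"
        by (rule power_mono[OF mult_right_mono]) (use spec_norm_nonneg[of B] vnorm_nonneg[of y] in auto)
    qed
    also have "\<dots> = ?c\<^sup>2 * ((vnorm x)\<^sup>2 + (vnorm y)\<^sup>2)" by (simp only: power_mult_distrib distrib_left)
    also have "\<dots> = (?c * vnorm w)\<^sup>2" by (simp only: wxy vnorm_append_power2 power_mult_distrib)
    finally have "(vnorm (?M *\<^sub>v w))\<^sup>2 \<le> (?c * vnorm w)\<^sup>2" .
    moreover have "0 \<le> ?c * vnorm w" using c vnorm_nonneg[of w] by simp
    ultimately show "vnorm (?M *\<^sub>v w) \<le> ?c * vnorm w" by (rule power2_le_imp_le)
  qed
  moreover have "spec_norm A \<le> spec_norm ?M"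
  proof (rule spec_norm_le[OF A spec_norm_nonneg])
    fix x :: "complex vec" assume x: "x \<in> carrier_vec a"
    have "?M *\<^sub>v (x @\<^sub>v 0\<^sub>v b) = (A *\<^sub>v x) @\<^sub>v 0\<^sub>v b"
      using mult_mat_vec_split[OF A B x, of "0\<^sub>v b"] B by (simp add: mult_mat_vec_zero)
    then show "vnorm (A *\<^sub>v x) \<le> spec_norm ?M * vnorm x"
      using spec_norm_bound[OF M, of "x @\<^sub>v 0\<^sub>v b"] x by (simp add: vnorm_append_zero)
  qed
  moreover have "spec_norm B \<le> spec_norm ?M"
  proof (rule spec_norm_le[OF B spec_norm_nonneg])
    fix y :: "complex vec" assume y: "y \<in> carrier_vec b"
    have "?M *\<^sub>v (0\<^sub>v a @\<^sub>v y) = 0\<^sub>v a @\<^sub>v (B *\<^sub>v y)"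
      using mult_mat_vec_split[OF A B _ y, of "0\<^sub>v a"] A by (simp add: mult_mat_vec_zero)
    then show "vnorm (B *\<^sub>v y) \<le> spec_norm ?M * vnorm y"
      using spec_norm_bound[OF M, of "0\<^sub>v a @\<^sub>v y"] y by (simp add: vnorm_append_zero)
  qed
  ultimately show ?thesis by simp
qed

lemma spec_norm_diag_block_mat:
  assumes "\<forall>D\<in>set Ds. D \<in> carrier_mat n n"
  shows "spec_norm (diag_block_mat Ds) = Max (insert 0 (spec_norm ` set Ds))"
  using assms
proof (induction Ds)
  case Nil
  obtain v where "v \<in> carrier_vec 0" "vnorm (0\<^sub>m 0 0 *\<^sub>v v) = spec_norm (0\<^sub>m 0 0 :: complex mat)"
    using spec_norm_attained[of "0\<^sub>m 0 0" 0 0] by auto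
  then show ?case by (simp add: vnorm_def)
next
  case (Cons D Ds)
  have D: "D \<in> carrier_mat n n" using Cons.prems by simp
  have Ds: "diag_block_mat Ds \<in> carrier_mat (length Ds * n) (length Ds * n)"
    using diag_block_mat_eq_mat[of Ds n n] Cons.prems by simp
  have "diag_block_mat (D # Ds)
      = four_block_mat D (0\<^sub>m n (length Ds * n)) (0\<^sub>m (length Ds * n) n) (diag_block_mat Ds)"
    using D Ds by (simp add: Let_def)
  then have "spec_norm (diag_block_mat (D # Ds)) = max (spec_norm D) (Max (insert 0 (spec_norm ` set Ds)))"
    using spec_norm_four_block_diag[OF D Ds] Cons by simp
  also have "\<dots> = Max (insert (spec_norm D) (insert 0 (spec_norm ` set Ds)))"
    by (rule Max_insert[symmetric]) auto
  also have "\<dots> = Max (insert 0 (spec_norm ` set (D # Ds)))"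
    by (simp add: insert_commute)
  finally show ?case .
qed

lemma spec_norm_diag_block_mat_map:
  assumes "\<forall>j\<le>d. DA j \<in> carrier_mat n n"
  shows "spec_norm (diag_block_mat (map DA [0..<d + 1])) = Max ((\<lambda>j. spec_norm (DA j)) ` {0..d})"
proof -
  have "spec_norm (diag_block_mat (map DA [0..<d + 1])) = Max (insert 0 ((\<lambda>j. spec_norm (DA j)) ` {0..d}))"
    using assms by (subst spec_norm_diag_block_mat[of _ n])
      (auto simp: image_image atLeastLessThanSuc_atLeastAtMost simp del: upt_Suc)
  also have "\<dots> = max 0 (Max ((\<lambda>j. spec_norm (DA j)) ` {0..d}))" by (rule Max_insert) auto
  also have "\<dots> = Max ((\<lambda>j. spec_norm (DA j)) ` {0..d})"
  proof (rule max_absorb2)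
    have "spec_norm (DA 0) \<le> Max ((\<lambda>j. spec_norm (DA j)) ` {0..d})" by (rule Max_ge) auto
    then show "0 \<le> Max ((\<lambda>j. spec_norm (DA j)) ` {0..d})" using spec_norm_nonneg[of "DA 0"] by linarith
  qed
  finally show ?thesis .
qed

section \<open>Perturbations of the polynomial block\<close>

lemma inverse_mu_S:
  "inverse (mu_S SS M) = Inf ((\<lambda>D. ereal (spec_norm D)) ` {D \<in> SS. det (1\<^sub>m (dim_col M) - D * M) = 0})"
proof (cases "{D \<in> SS. det (1\<^sub>m (dim_col M) - D * M) = 0} = {}")
  case False
  have "0 \<le> Inf ((\<lambda>D. ereal (spec_norm D)) ` {D \<in> SS. det (1\<^sub>m (dim_col M) - D * M) = 0})"
    by (rule Inf_greatest) (auto simp: spec_norm_nonneg)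
  then show ?thesis unfolding mu_S_def Let_def if_not_P[OF False] by auto
next
  case True
  then show ?thesis unfolding mu_S_def Let_def
    by (simp only: True if_True image_empty Inf_empty) (simp add: top_ereal_def)
qed

lemma blockdiag_set_eq_image:
  "blockdiag_set n d = (\<lambda>DA. diag_block_mat (map DA [0..<d + 1])) ` {DA. \<forall>j\<le>d. DA j \<in> carrier_mat n n}"
proof (intro equalityI subsetI)
  fix D :: "complex mat" assume "D \<in> blockdiag_set n d"
  then obtain Ds where Ds: "D = diag_block_mat Ds" "length Ds = d + 1" "\<forall>X\<in>set Ds. X \<in> carrier_mat n n"
    unfolding blockdiag_set_def by blast
  have "map ((!) Ds) [0..<d + 1] = Ds" using Ds(2) by (metis map_nth)
  moreover have "\<forall>j\<le>d. Ds ! j \<in> carrier_mat n n" using Ds(2,3) by auto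
  ultimately show "D \<in> (\<lambda>DA. diag_block_mat (map DA [0..<d + 1])) ` {DA. \<forall>j\<le>d. DA j \<in> carrier_mat n n}"
    using Ds(1) by (auto intro!: image_eqI[of _ _ "(!) Ds"])
next
  fix D :: "complex mat" assume "D \<in> (\<lambda>DA. diag_block_mat (map DA [0..<d + 1])) ` {DA. \<forall>j\<le>d. DA j \<in> carrier_mat n n}"
  then obtain DA where "D = diag_block_mat (map DA [0..<d + 1])" "\<forall>j\<le>d. DA j \<in> carrier_mat n n"
    by blast
  then show "D \<in> blockdiag_set n d"
    unfolding blockdiag_set_def by (auto intro!: exI[of _ "map DA [0..<d + 1]"] simp del: upt_Suc)
qed

lemma eta_P_eq:
  assumes S: "rosen r A B C As d l \<in> carrier_mat (r + n) (r + n)"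
    and Sinv: "Sinv \<in> carrier_mat (r + n) (r + n)" "rosen r A B C As d l * Sinv = 1\<^sub>m (r + n)"
  shows "eta_P r n A B C As d l
           = inverse (mu_S (blockdiag_set n d) (J2 r n d * Sinv * powrow (r + n) d l * J1 r n d))"
proof -
  let ?U = "powrow (r + n) d l * J1 r n d" and ?V = "J2 r n d"
  let ?M = "J2 r n d * Sinv * powrow (r + n) d l * J1 r n d"
  let ?D = "\<lambda>DA. diag_block_mat (map DA [0..<d + 1])"
  have U: "?U \<in> carrier_mat (r + n) ((d + 1) * n)" unfolding powrow_mult_J1 by simp
  have V: "?V \<in> carrier_mat ((d + 1) * n) (r + n)" unfolding J2_eq_mat by simp
  have "?V * Sinv \<in> carrier_mat ((d + 1) * n) (r + n)" using V Sinv(1) by simp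
  moreover have "powrow (r + n) d l \<in> carrier_mat (r + n) ((d + 1) * (r + n))"
    and J1: "J1 r n d \<in> carrier_mat ((d + 1) * (r + n)) ((d + 1) * n)"
    unfolding powrow_eq_mat J1_eq_mat by simp_all
  ultimately have M: "?M = ?V * Sinv * ?U" by (rule assoc_mult_mat)
  have dim_M: "dim_col ?M = (d + 1) * n" using J1 by simp
  have singular_iff: "det (rosen r A B C As d l - four_block_mat (0\<^sub>m r r) (0\<^sub>m r n) (0\<^sub>m n r) (mpoly DA d l)) = 0
      \<longleftrightarrow> det (1\<^sub>m (dim_col ?M) - ?D DA * ?M) = 0" if DA: "\<forall>j\<le>d. DA j \<in> carrier_mat n n" for DA
  proof -
    have "?D DA \<in> carrier_mat ((d + 1) * n) ((d + 1) * n)"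
      unfolding diag_block_mat_map_eq_mat[OF DA] by simp
    from det_perturbation_eq_0_iff[OF S Sinv U this V] show ?thesis
      unfolding four_block_P_eq[OF DA] dim_M by (simp only: M)
  qed
  let ?P = "\<lambda>DA. \<forall>j\<le>d. DA j \<in> carrier_mat n n"
  have "eta_P r n A B C As d l = Inf ((\<lambda>DA. ereal (Max ((\<lambda>j. spec_norm (DA j)) ` {0..d}))) `
      {DA. ?P DA \<and> det (rosen r A B C As d l
                  - four_block_mat (0\<^sub>m r r) (0\<^sub>m r n) (0\<^sub>m n r) (mpoly DA d l)) = 0})"
    unfolding eta_P_def by (rule arg_cong[where f = Inf]) blast
  also have "{DA. ?P DA \<and> det (rosen r A B C As d l
                  - four_block_mat (0\<^sub>m r r) (0\<^sub>m r n) (0\<^sub>m n r) (mpoly DA d l)) = 0}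
      = {DA. ?P DA \<and> det (1\<^sub>m (dim_col ?M) - ?D DA * ?M) = 0}"
    using singular_iff by blast
  also have "(\<lambda>DA. ereal (Max ((\<lambda>j. spec_norm (DA j)) ` {0..d}))) `
      {DA. ?P DA \<and> det (1\<^sub>m (dim_col ?M) - ?D DA * ?M) = 0}
      = (\<lambda>D. ereal (spec_norm D)) ` ?D ` {DA. ?P DA \<and> det (1\<^sub>m (dim_col ?M) - ?D DA * ?M) = 0}"
    unfolding image_image
    by (rule image_cong[OF refl]) (metis (no_types, lifting) mem_Collect_eq spec_norm_diag_block_mat_map)
  also have "?D ` {DA. ?P DA \<and> det (1\<^sub>m (dim_col ?M) - ?D DA * ?M) = 0}
      = {D \<in> blockdiag_set n d. det (1\<^sub>m (dim_col ?M) - D * ?M) = 0}"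
    unfolding blockdiag_set_eq_image by blast
  finally show ?thesis by (simp only: inverse_mu_S)
qed

theorem theorem2p3:
  fixes r n d :: nat and A B C Sinv :: "complex mat" and As :: "nat \<Rightarrow> complex mat" and l :: complex
  assumes "A \<in> carrier_mat r r" and "B \<in> carrier_mat r n" and "C \<in> carrier_mat n r"
    and "\<forall>k\<le>d. As k \<in> carrier_mat n n"
    and "invertible_mat (rosen r A B C As d l)"
    and "Sinv \<in> carrier_mat (r + n) (r + n)"
    and "rosen r A B C As d l * Sinv = 1\<^sub>m (r + n)"
    and "Sinv * rosen r A B C As d l = 1\<^sub>m (r + n)"
  shows "(eta_B r n A B C As d l < \<infinity> \<longrightarrow>
           eta_B r n A B C As d l =
             inverse (ereal (sigma_max (hcat (0\<^sub>m n r) (1\<^sub>m n) * Sinv *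
                                         transpose_mat (hcat (1\<^sub>m r) (0\<^sub>m r n))))))
       \<and> (eta_C r n A B C As d l < \<infinity> \<longrightarrow>
           eta_C r n A B C As d l =
             inverse (ereal (sigma_max (hcat (1\<^sub>m r) (0\<^sub>m r n) * Sinv *
                                         transpose_mat (hcat (0\<^sub>m n r) (1\<^sub>m n))))))
       \<and> (eta_P r n A B C As d l < \<infinity> \<longrightarrow>
           eta_P r n A B C As d l =
             inverse (mu_S (blockdiag_set n d)
                        (J2 r n d * Sinv * powrow (r + n) d l * J1 r n d)))"
proof -
  have S: "rosen r A B C As d l \<in> carrier_mat (r + n) (r + n)"
    using assms(1-4) by (rule rosen_carrier)
  show ?thesis
    using eta_B_eq[OF S assms(6,7)] eta_C_eq[OF S assms(6,7)] eta_P_eq[OF S assms(6,7)] by blast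
qed

end
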